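(* Let $V$ be a complex normed vector space, $x\in l^{\infty}(V)$ and $v\in V$. Then $x$ is strongly almost convergent to $v$ if and only if $p(x-\widetilde v)=0$.
   Context: $\mathbb{N}=\{1,2,3,\dots\}$. $l^{\infty}(V)$ is the space of bounded sequences $x=\{x_n\}_{n=1}^\infty$ in $V$ with norm $\|x\|_\infty=\sup_n\|x_n\|_V$. For $v\in V$, $\widetilde v=\{v,v,\dots\}$. $T$ is the left shift: $T\{x_1,x_2,\dots\}=\{x_2,x_3,\dots\}$. A Banach limit functional is a bounded linear functional $L$ on $l^\infty(V)$ with $\|L\|\le1$ and $L(Tx)=L(x)$ for all $x$. A sequence $x\in l^\infty(V)$ is strongly almost convergent to $v\in V$ if $L(x)=L(\widetilde v)$ for every Banach limit functional $L$. For $x\in l^\infty(V)$, $p(x):=\lim_{n\to\infty}\left(\sup_{j\in\mathbb{N}}\frac1n\left\|\sum_{i=0}^{n-1}x_{i+j}\right\|_V\right)$ (this limit exists). *)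

theory Defs
  imports "HOL-Analysis.Analysis"
begin

text \<open>Complex normed vector spaces (not in the distribution library):
  a real normed vector space with a compatible complex scalar multiplication
  (as in the AFP entry Complex_Bounded_Operators).\<close>

class complex_normed_vector = real_normed_vector +
  fixes cscale :: "complex \<Rightarrow> 'a \<Rightarrow> 'a"
  assumes cscale_add_right: "cscale a (x + y) = cscale a x + cscale a y"
    and cscale_add_left: "cscale (a + b) x = cscale a x + cscale b x"
    and cscale_cscale: "cscale a (cscale b x) = cscale (a * b) x"
    and cscale_one: "cscale 1 x = x"
    and cscale_of_real: "cscale (of_real r) x = scaleR r x"
    and norm_cscale: "norm (cscale a x) = cmod a * norm x"

text \<open>Sequences in V are indexed from 0 (x 0 plays the role of x_1).
  l^infty(V) is the set of sequences satisfying Bseq.\<close>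

definition sup_norm :: "(nat \<Rightarrow> 'a::real_normed_vector) \<Rightarrow> real" where
  "sup_norm x = (SUP n. norm (x n))"

definition lshift :: "(nat \<Rightarrow> 'a) \<Rightarrow> nat \<Rightarrow> 'a" where
  "lshift x = (\<lambda>n. x (Suc n))"

definition const_seq :: "'a \<Rightarrow> nat \<Rightarrow> 'a" where
  "const_seq v = (\<lambda>_. v)"

text \<open>A Banach limit functional: a complex-linear functional on l^infty(V)
  of norm at most 1, invariant under the left shift. Only its values on
  bounded sequences matter.\<close>

definition banach_limit_functional ::
  "((nat \<Rightarrow> 'a::complex_normed_vector) \<Rightarrow> complex) \<Rightarrow> bool" where
  "banach_limit_functional L \<longleftrightarrow>
     (\<forall>x y. Bseq x \<and> Bseq y \<longrightarrow> L (\<lambda>n. x n + y n) = L x + L y) \<and>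
     (\<forall>c x. Bseq x \<longrightarrow> L (\<lambda>n. cscale c (x n)) = c * L x) \<and>
     (\<forall>x. Bseq x \<longrightarrow> norm (L x) \<le> sup_norm x) \<and>
     (\<forall>x. Bseq x \<longrightarrow> L (lshift x) = L x)"

definition strongly_almost_convergent ::
  "(nat \<Rightarrow> 'a::complex_normed_vector) \<Rightarrow> 'a \<Rightarrow> bool" where
  "strongly_almost_convergent x v \<longleftrightarrow>
     (\<forall>L. banach_limit_functional L \<longrightarrow> L x = L (const_seq v))"

definition p_func :: "(nat \<Rightarrow> 'a::real_normed_vector) \<Rightarrow> real" where
  "p_func x = lim (\<lambda>n. (SUP j. norm (\<Sum>i<n. x (i + j))) / real n)"

end

theory Submission
  imports Defs "HOL-Library.Function_Algebras"
begin

text \<open>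
  Writing \<open>y = x - v\<close>, this amounts to: every Banach limit vanishes at \<open>y\<close> iff \<open>p(y) = 0\<close>.

  \<^item> \<open>p\<close> is well defined by Fekete's lemma, because the window suprema are subadditive in
    the window length; it is a seminorm on bounded sequences, bounded by the sup-norm,
    and it vanishes on every \<open>y - T y\<close>, \<open>T\<close> the left shift.
  \<^item> Every Banach limit satisfies \<open>|L y| \<le> p(y)\<close>: averaging \<open>y\<close> over windows of length \<open>n\<close>
    does not change \<open>L y\<close> but lowers the sup-norm to the \<open>n\<close>-th term of the sequence
    defining \<open>p\<close>.
  \<^item> Conversely, if \<open>p(y) > 0\<close>, a Hahn--Banach argument (proved here via a minimal
    sublinear functional obtained from Zorn's lemma) gives a real-linear \<open>f \<le> p\<close> with
    \<open>f(y) = p(y)\<close>.  Such an \<open>f\<close> is automatically shift invariant, and its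
    complexification \<open>z \<mapsto> f(z) - \<i> f(\<i> z)\<close> is a Banach limit not vanishing at \<open>y\<close>.
\<close>

section \<open>Sublinear functionals and a Hahn--Banach theorem\<close>

definition sublinear_on :: "'v::real_vector set \<Rightarrow> ('v \<Rightarrow> real) \<Rightarrow> bool" where
  "sublinear_on S r \<longleftrightarrow>
     (\<forall>a\<in>S. \<forall>b\<in>S. r (a + b) \<le> r a + r b) \<and> (\<forall>c>0. \<forall>a\<in>S. r (c *\<^sub>R a) \<le> c * r a)"

definition linear_functional_on :: "'v::real_vector set \<Rightarrow> ('v \<Rightarrow> real) \<Rightarrow> bool" where
  "linear_functional_on S f \<longleftrightarrow>
     (\<forall>a\<in>S. \<forall>b\<in>S. f (a + b) = f a + f b) \<and> (\<forall>c. \<forall>a\<in>S. f (c *\<^sub>R a) = c * f a)"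

lemma sublinear_on_add: "sublinear_on S r \<Longrightarrow> a \<in> S \<Longrightarrow> b \<in> S \<Longrightarrow> r (a + b) \<le> r a + r b"
  by (simp add: sublinear_on_def)

lemma sublinear_on_scale: "sublinear_on S r \<Longrightarrow> c > 0 \<Longrightarrow> a \<in> S \<Longrightarrow> r (c *\<^sub>R a) \<le> c * r a"
  by (simp add: sublinear_on_def)

lemma sublinear_on_scale_eq:
  assumes "subspace S" "sublinear_on S r" "c > 0" "a \<in> S"
  shows "r (c *\<^sub>R a) = c * r a"
proof -
  have "r (inverse c *\<^sub>R (c *\<^sub>R a)) \<le> inverse c * r (c *\<^sub>R a)"
    using assms by (intro sublinear_on_scale) (auto simp: subspace_def)
  then have "c * r a \<le> r (c *\<^sub>R a)"
    using assms(3) by (simp add: field_simps)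
  with sublinear_on_scale[OF assms(2-4)] show ?thesis by simp
qed

lemma sublinear_on_zero:
  assumes "subspace S" "sublinear_on S r"
  shows "r 0 = 0"
proof -
  have z: "0 \<in> S" using assms(1) by (simp add: subspace_def)
  have "r 0 \<le> r 0 + r 0" using sublinear_on_add[OF assms(2) z z] by simp
  moreover have "r ((1/2) *\<^sub>R 0) \<le> (1/2) * r 0"
    by (rule sublinear_on_scale[OF assms(2) _ z]) simp
  ultimately show ?thesis by simp
qed

lemma sublinear_on_lower:
  assumes "subspace S" "sublinear_on S r" "a \<in> S"
  shows "- r (- a) \<le> r a"
proof -
  have "r (a + - a) \<le> r a + r (- a)"
    using assms by (intro sublinear_on_add) (auto simp: subspace_neg)
  then show ?thesis using sublinear_on_zero[OF assms(1,2)] by simp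
qed

text \<open>It is again sublinear, lies below \<open>r\<close>,
  and satisfies \<open>tilt r a (-a) \<le> -r(a)\<close>; this is the one-step extension device of
  Hahn--Banach.\<close>

definition tilt :: "('v::real_vector \<Rightarrow> real) \<Rightarrow> 'v \<Rightarrow> 'v \<Rightarrow> real" where
  "tilt r a z = (INF t\<in>{0..}. r (z + t *\<^sub>R a) - t * r a)"

text \<open>Throughout, \<open>r\<close> is sublinear on \<open>S\<close> and \<open>a \<in> S\<close>; the lower bound \<open>-r(-z)\<close> makes the
  infimum defining \<open>tilt r a z\<close> finite.\<close>

context
  fixes S :: "'v::real_vector set" and r :: "'v \<Rightarrow> real" and a :: 'v
  assumes S: "subspace S" and r: "sublinear_on S r" and a: "a \<in> S"
begin

lemma tilt_term_lower:
  assumes z: "z \<in> S" and t: "t \<ge> 0"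
  shows "- r (- z) \<le> r (z + t *\<^sub>R a) - t * r a"
proof -
  have "r ((z + t *\<^sub>R a) + - z) \<le> r (z + t *\<^sub>R a) + r (- z)"
    using S z a by (intro sublinear_on_add[OF r]) (auto simp: subspace_neg subspace_add subspace_scale)
  moreover have "r (t *\<^sub>R a) = t * r a"
    using sublinear_on_zero[OF S r] sublinear_on_scale_eq[OF S r _ a] t
    by (cases "t = 0") auto
  ultimately show ?thesis by simp
qed

lemma tilt_le:
  assumes "z \<in> S" "t \<ge> 0"
  shows "tilt r a z \<le> r (z + t *\<^sub>R a) - t * r a"
  unfolding tilt_def using assms tilt_term_lower[OF assms(1)]
  by (intro cINF_lower bdd_belowI2[where m="- r (- z)"]) auto

lemma tilt_ge:
  assumes "\<And>t. t \<ge> 0 \<Longrightarrow> m \<le> r (z + t *\<^sub>R a) - t * r a"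
  shows "m \<le> tilt r a z"
  unfolding tilt_def using assms by (auto intro: cINF_greatest)

lemma tilt_le_self: "z \<in> S \<Longrightarrow> tilt r a z \<le> r z"
  using tilt_le[of z 0] by simp

lemma tilt_neg: "tilt r a (- a) \<le> - r a"
  using tilt_le[of "- a" 1] S a sublinear_on_zero[OF S r] by (simp add: subspace_neg)

lemma tilt_sublinear: "sublinear_on S (tilt r a)"
  unfolding sublinear_on_def
proof (intro conjI ballI allI impI)
  fix z w assume z: "z \<in> S" and w: "w \<in> S"
  have split: "tilt r a (z + w) - (r (w + t *\<^sub>R a) - t * r a) \<le> r (z + s *\<^sub>R a) - s * r a"
    if s: "s \<ge> 0" and t: "t \<ge> 0" for s t
  proof -
    have "tilt r a (z + w) \<le> r ((z + w) + (s + t) *\<^sub>R a) - (s + t) * r a"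
      using tilt_le S z w s t by (simp add: subspace_add)
    also have "(z + w) + (s + t) *\<^sub>R a = (z + s *\<^sub>R a) + (w + t *\<^sub>R a)"
      by (simp add: algebra_simps)
    also have "r \<dots> \<le> r (z + s *\<^sub>R a) + r (w + t *\<^sub>R a)"
      using S z w a by (intro sublinear_on_add[OF r]) (auto simp: subspace_add subspace_scale)
    finally show ?thesis by (simp add: algebra_simps)
  qed
  have "tilt r a (z + w) - (r (w + t *\<^sub>R a) - t * r a) \<le> tilt r a z" if "t \<ge> 0" for t
    using split that by (intro tilt_ge) auto
  then have "tilt r a (z + w) - tilt r a z \<le> tilt r a w"
    by (intro tilt_ge) fastforce
  then show "tilt r a (z + w) \<le> tilt r a z + tilt r a w" by simp
next
  fix c :: real and z assume c: "c > 0" and z: "z \<in> S"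
  have "tilt r a (c *\<^sub>R z) / c \<le> r (z + t *\<^sub>R a) - t * r a" if t: "t \<ge> 0" for t
  proof -
    have "tilt r a (c *\<^sub>R z) \<le> r (c *\<^sub>R z + (c * t) *\<^sub>R a) - (c * t) * r a"
      using tilt_le S z c t by (simp add: subspace_scale)
    also have "c *\<^sub>R z + (c * t) *\<^sub>R a = c *\<^sub>R (z + t *\<^sub>R a)" by (simp add: algebra_simps)
    also have "r \<dots> \<le> c * r (z + t *\<^sub>R a)"
      using S z a c by (intro sublinear_on_scale[OF r]) (auto simp: subspace_add subspace_scale)
    finally show ?thesis using c by (simp add: field_simps)
  qed
  then have "tilt r a (c *\<^sub>R z) / c \<le> tilt r a z" by (rule tilt_ge)
  then show "tilt r a (c *\<^sub>R z) \<le> c * tilt r a z" using c by (simp add: field_simps)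
qed

end

lemma sublinear_on_chain_Inf:
  assumes S: "subspace S" and ne: "C \<noteq> {}" and sub: "\<And>r. r \<in> C \<Longrightarrow> sublinear_on S r"
    and chain: "\<And>r1 r2. r1 \<in> C \<Longrightarrow> r2 \<in> C \<Longrightarrow> (\<forall>z\<in>S. r1 z \<le> r2 z) \<or> (\<forall>z\<in>S. r2 z \<le> r1 z)"
    and below: "\<And>r z. r \<in> C \<Longrightarrow> z \<in> S \<Longrightarrow> b z \<le> r z"
  shows "sublinear_on S (\<lambda>z. INF r\<in>C. r z)"
    (is "sublinear_on S ?u")
proof -
  have u_le: "?u z \<le> r z" if "r \<in> C" "z \<in> S" for r z
    using that below by (intro cINF_lower bdd_belowI2) auto
  have u_ge: "m \<le> ?u z" if "\<And>r. r \<in> C \<Longrightarrow> m \<le> r z" for m z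
    using that ne by (intro cINF_greatest) auto
  show ?thesis
    unfolding sublinear_on_def
  proof (intro conjI ballI allI impI)
    fix a b assume a: "a \<in> S" and b: "b \<in> S"
    have ab: "a + b \<in> S" using S a b by (simp add: subspace_add)
    have cross: "?u (a + b) \<le> r1 a + r2 b" if r1: "r1 \<in> C" and r2: "r2 \<in> C" for r1 r2
      using chain[OF r1 r2]
    proof
      assume "\<forall>z\<in>S. r1 z \<le> r2 z"
      then have "?u (a + b) \<le> r1 a + r1 b"
        using u_le[OF r1 ab] sublinear_on_add[OF sub[OF r1] a b] by linarith
      then show ?thesis using \<open>\<forall>z\<in>S. r1 z \<le> r2 z\<close> b by fastforce
    next
      assume "\<forall>z\<in>S. r2 z \<le> r1 z"
      then have "?u (a + b) \<le> r2 a + r2 b"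
        using u_le[OF r2 ab] sublinear_on_add[OF sub[OF r2] a b] by linarith
      then show ?thesis using \<open>\<forall>z\<in>S. r2 z \<le> r1 z\<close> a by fastforce
    qed
    have "?u (a + b) - r2 b \<le> ?u a" if "r2 \<in> C" for r2
      using cross that by (intro u_ge) force
    then have "?u (a + b) - ?u a \<le> ?u b" by (intro u_ge) force
    then show "?u (a + b) \<le> ?u a + ?u b" by simp
  next
    fix c :: real and a assume c: "c > 0" and a: "a \<in> S"
    have "?u (c *\<^sub>R a) / c \<le> r a" if r: "r \<in> C" for r
    proof -
      have "?u (c *\<^sub>R a) \<le> c * r a"
        using u_le[OF r] sublinear_on_scale[OF sub[OF r] c a] S a
        by (meson order_trans subspace_scale)
      then show ?thesis using c by (simp add: field_simps)
    qed
    then have "?u (c *\<^sub>R a) / c \<le> ?u a" by (rule u_ge)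
    then show "?u (c *\<^sub>R a) \<le> c * ?u a" using c by (simp add: field_simps)
  qed
qed

text \<open>Sublinear functionals below \<open>q\<close>, normalised to vanish outside \<open>S\<close> so that the
  pointwise order on \<open>S\<close> is antisymmetric among them.\<close>

definition sublinear_minorants :: "'v::real_vector set \<Rightarrow> ('v \<Rightarrow> real) \<Rightarrow> ('v \<Rightarrow> real) set" where
  "sublinear_minorants S q =
     {r. sublinear_on S r \<and> (\<forall>z. z \<notin> S \<longrightarrow> r z = 0) \<and> (\<forall>z\<in>S. r z \<le> q z)}"

lemma sublinear_on_restrict:
  assumes "subspace S" "sublinear_on S r"
  shows "sublinear_on S (\<lambda>z. if z \<in> S then r z else 0)"
  using assms by (auto simp: sublinear_on_def subspace_add subspace_scale)

lemma sublinear_minorants_chain_bound: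
  assumes S: "subspace S" and CA: "C \<subseteq> sublinear_minorants S q" and ne: "C \<noteq> {}"
    and chain: "\<And>r1 r2. r1 \<in> C \<Longrightarrow> r2 \<in> C \<Longrightarrow> (\<forall>z\<in>S. r1 z \<le> r2 z) \<or> (\<forall>z\<in>S. r2 z \<le> r1 z)"
  shows "\<exists>u\<in>sublinear_minorants S q. \<forall>r\<in>C. \<forall>z\<in>S. u z \<le> r z"
proof -
  define u where "u = (\<lambda>z. if z \<in> S then INF r\<in>C. r z else 0)"
  have sub: "sublinear_on S r" if "r \<in> C" for r
    using that CA by (auto simp: sublinear_minorants_def)
  have lower: "- q (- z) \<le> r z" if "r \<in> C" "z \<in> S" for r z
  proof -
    have "r (- z) \<le> q (- z)"
      using that CA S by (auto simp: sublinear_minorants_def subspace_neg)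
    with sublinear_on_lower[OF S sub[OF that(1)] that(2)] show ?thesis by linarith
  qed
  have "sublinear_on S u"
  proof -
    have "sublinear_on S (\<lambda>z. INF r\<in>C. r z)"
      by (rule sublinear_on_chain_Inf[OF S ne, where b="\<lambda>z. - q (- z)"]) (use sub chain lower in auto)
    then show ?thesis unfolding u_def by (rule sublinear_on_restrict[OF S])
  qed
  moreover have u_le: "u z \<le> r z" if "r \<in> C" "z \<in> S" for r z
  proof -
    have "bdd_below ((\<lambda>r. r z) ` C)" using lower[OF _ that(2)] by (intro bdd_belowI2) auto
    then have "(INF r\<in>C. r z) \<le> r z" using that(1) by (rule cINF_lower)
    with that(2) show ?thesis by (simp add: u_def)
  qed
  moreover have "u z \<le> q z" if "z \<in> S" for z
    using u_le[OF _ that] ne CA that by (force simp: sublinear_minorants_def)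
  ultimately show ?thesis by (auto simp: sublinear_minorants_def u_def)
qed

lemma sublinear_on_minimal_below:
  assumes S: "subspace S" and q: "sublinear_on S q"
  obtains m where "sublinear_on S m" "\<And>z. z \<in> S \<Longrightarrow> m z \<le> q z"
    and "\<And>r z. sublinear_on S r \<Longrightarrow> \<forall>w\<in>S. r w \<le> m w \<Longrightarrow> z \<in> S \<Longrightarrow> r z = m z"
proof -
  define A where "A = sublinear_minorants S q"
  define below where "below r1 r2 \<longleftrightarrow> (\<forall>z\<in>S. r2 z \<le> r1 z)" for r1 r2 :: "'a \<Rightarrow> real"
  define restr where "restr r = (\<lambda>z. if z \<in> S then r z else 0)" for r :: "'a \<Rightarrow> real"
  have restr_in_A: "restr r \<in> A" if "sublinear_on S r" "\<forall>z\<in>S. r z \<le> q z" for r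
    using sublinear_on_restrict[OF S that(1)] that(2)
    by (auto simp: A_def sublinear_minorants_def restr_def)
  have po: "partial_order_on A (relation_of below A)"
    by (rule partial_order_on_relation_ofI)
      (auto simp: below_def A_def sublinear_minorants_def fun_eq_iff intro: order_trans,
       metis order.antisym)
  have "\<exists>m\<in>A. \<forall>r\<in>A. below m r \<longrightarrow> r = m"
  proof (rule predicate_Zorn[OF po])
    fix C assume C: "C \<in> Chains (relation_of below A)"
    show "\<exists>u\<in>A. \<forall>r\<in>C. below r u"
    proof (cases "C = {}")
      case True
      then show ?thesis using restr_in_A[OF q] by auto
    next
      case False
      have "C \<subseteq> A" using C by (rule Chains_relation_of)
      moreover have "(\<forall>z\<in>S. r1 z \<le> r2 z) \<or> (\<forall>z\<in>S. r2 z \<le> r1 z)" if "r1 \<in> C" "r2 \<in> C" for r1 r2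
        using C that unfolding Chains_def relation_of_def below_def by auto
      ultimately show ?thesis
        using sublinear_minorants_chain_bound[OF S _ False] by (auto simp: A_def below_def)
    qed
  qed
  then obtain m where mA: "m \<in> A" and max: "\<And>r. r \<in> A \<Longrightarrow> below m r \<Longrightarrow> r = m" by blast
  show ?thesis
  proof
    show "sublinear_on S m" "\<And>z. z \<in> S \<Longrightarrow> m z \<le> q z"
      using mA by (auto simp: A_def sublinear_minorants_def)
  next
    fix r z assume r: "sublinear_on S r" "\<forall>w\<in>S. r w \<le> m w" and z: "z \<in> S"
    have "restr r \<in> A"
      using mA r by (intro restr_in_A) (auto simp: A_def sublinear_minorants_def intro: order_trans)
    moreover have "below m (restr r)" using r by (simp add: below_def restr_def)
    ultimately have "restr r = m" by (rule max)
    then show "r z = m z" using z by (metis restr_def)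
  qed
qed

text \<open>A minimal sublinear functional is linear: its tilt in any direction \<open>a\<close> lies below
  it, hence coincides with it, which forces \<open>m(-a) = -m(a)\<close>.\<close>

lemma minimal_sublinear_on_linear:
  assumes S: "subspace S" and m: "sublinear_on S m"
    and min: "\<And>r z. sublinear_on S r \<Longrightarrow> \<forall>w\<in>S. r w \<le> m w \<Longrightarrow> z \<in> S \<Longrightarrow> r z = m z"
  shows "linear_functional_on S m"
proof -
  have neg: "m (- a) = - m a" if a: "a \<in> S" for a
  proof -
    have "tilt m a (- a) = m (- a)"
      using tilt_sublinear[OF S m a] tilt_le_self[OF S m a] S a by (intro min) (auto simp: subspace_neg)
    then have "m (- a) \<le> - m a" using tilt_neg[OF S m a] by simp
    with sublinear_on_lower[OF S m a] show ?thesis by linarith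
  qed
  have add: "m (a + b) = m a + m b" if a: "a \<in> S" and b: "b \<in> S" for a b
  proof -
    have "m (- a + - b) \<le> m (- a) + m (- b)"
      using S a b by (intro sublinear_on_add[OF m]) (auto simp: subspace_neg)
    moreover have "m (- a + - b) = - m (a + b)"
      using neg[of "a + b"] S a b by (simp add: subspace_add)
    ultimately show ?thesis
      using sublinear_on_add[OF m a b] neg[OF a] neg[OF b] by linarith
  qed
  have scale: "m (c *\<^sub>R a) = c * m a" if a: "a \<in> S" for c a
  proof (cases c "0 :: real" rule: linorder_cases)
    case less
    have "m (c *\<^sub>R a) = m (- ((- c) *\<^sub>R a))" by simp
    also have "\<dots> = - m ((- c) *\<^sub>R a)" using neg S a by (simp add: subspace_scale)
    also have "\<dots> = c * m a" using sublinear_on_scale_eq[OF S m _ a, of "- c"] less by simp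
    finally show ?thesis .
  next
    case equal then show ?thesis using sublinear_on_zero[OF S m] by simp
  next
    case greater then show ?thesis using sublinear_on_scale_eq[OF S m _ a] by simp
  qed
  show ?thesis using add scale by (simp add: linear_functional_on_def)
qed

text \<open>Take a minimal sublinear
  functional below the tilt of \<open>q\<close> in direction \<open>y\<close>.\<close>

lemma hahn_banach_dominated:
  assumes S: "subspace S" and q: "sublinear_on S q" and y: "y \<in> S"
  obtains f where "linear_functional_on S f" "\<And>z. z \<in> S \<Longrightarrow> f z \<le> q z" "f y = q y"
proof -
  obtain m where m: "sublinear_on S m" and m_le: "\<And>z. z \<in> S \<Longrightarrow> m z \<le> tilt q y z"
    and min: "\<And>r z. sublinear_on S r \<Longrightarrow> \<forall>w\<in>S. r w \<le> m w \<Longrightarrow> z \<in> S \<Longrightarrow> r z = m z"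
    using sublinear_on_minimal_below[OF S tilt_sublinear[OF S q y]] by blast
  have lin: "linear_functional_on S m" using S m min by (rule minimal_sublinear_on_linear)
  have le_q: "m z \<le> q z" if "z \<in> S" for z
    using m_le[OF that] tilt_le_self[OF S q y that] by linarith
  have "m (- y) = - m y"
    using lin y unfolding linear_functional_on_def by (metis scaleR_minus1_left mult_minus1)
  moreover have "m (- y) \<le> - q y"
    using m_le[of "- y"] tilt_neg[OF S q y] S y by (simp add: subspace_neg)
  ultimately have "m y = q y" using le_q[OF y] by linarith
  with lin le_q show ?thesis using that by blast
qed

section \<open>Fekete's subadditive lemma\<close>

text \<open>The key estimate for a nonnegative subadditive sequence: writing \<open>n = q k + r\<close> with
  \<open>r < k\<close> bounds \<open>a n / n\<close> by \<open>a k / k\<close> up to an error of order \<open>1 / n\<close>.\<close>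

lemma subadditive_average_bound:
  fixes a :: "nat \<Rightarrow> real"
  assumes sub: "\<And>m n. a (m + n) \<le> a m + a n" and nonneg: "\<And>n. 0 \<le> a n"
    and k: "k \<ge> 1" and n: "n \<ge> 1"
  shows "a n / real n \<le> a k / real k + (a 0 + real k * a 1) / real n"
proof -
  have linear_growth: "a m \<le> a 0 + real m * a 1" for m
  proof (induction m)
    case (Suc m)
    have "a (Suc m) \<le> a 1 + a m" using sub[of 1 m] by simp
    with Suc show ?case by (simp add: algebra_simps)
  qed simp
  have multiples: "a (q * k + r) \<le> real q * a k + a r" for q r
  proof (induction q)
    case (Suc q)
    have "a (Suc q * k + r) \<le> a k + a (q * k + r)" using sub[of k "q * k + r"] by (simp add: add_ac)
    with Suc show ?case by (simp add: algebra_simps)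
  qed simp
  have "real (n mod k) * a 1 \<le> real k * a 1"
    using k by (intro mult_right_mono nonneg) (simp add: less_imp_le)
  then have "a (n mod k) \<le> a 0 + real k * a 1"
    using linear_growth[of "n mod k"] by linarith
  then have "a n \<le> real (n div k) * a k + (a 0 + real k * a 1)"
    using multiples[of "n div k" "n mod k"] by simp
  moreover have "real (n div k) * a k \<le> real n * (a k / real k)"
  proof -
    have "real (n div k) * real k \<le> real n"
      by (metis div_times_less_eq_dividend of_nat_le_iff of_nat_mult)
    then have "(real (n div k) * real k) * a k \<le> real n * a k" by (rule mult_right_mono[OF _ nonneg])
    then show ?thesis using k by (simp add: field_simps)
  qed
  ultimately show ?thesis using n by (simp add: field_simps)
qed

text \<open>This is why the limit defining \<open>p\<close> exists.\<close>

lemma fekete_subadditive: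
  fixes a :: "nat \<Rightarrow> real"
  assumes sub: "\<And>m n. a (m + n) \<le> a m + a n" and nonneg: "\<And>n. 0 \<le> a n"
  shows "(\<lambda>n. a n / real n) \<longlonglongrightarrow> (INF k\<in>{1..}. a k / real k)"
proof -
  define l where "l = (INF k\<in>{1..}. a k / real k)"
  have bdd: "bdd_below ((\<lambda>k. a k / real k) ` {1..})"
    using nonneg by (intro bdd_belowI2[where m=0]) auto
  show ?thesis
    unfolding l_def[symmetric]
  proof (rule order_tendstoI)
    fix b assume "b < l"
    have "l \<le> a n / real n" if "n \<ge> 1" for n
      unfolding l_def using that bdd by (auto intro: cINF_lower)
    with \<open>b < l\<close> show "\<forall>\<^sub>F n in sequentially. b < a n / real n"
      using eventually_ge_at_top[of 1] by (metis (mono_tags, lifting) eventually_mono less_le_trans)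
  next
    fix b assume "l < b"
    then obtain k where k: "k \<ge> 1" and ak: "a k / real k < b"
      unfolding l_def using bdd by (auto simp: cINF_less_iff)
    have "\<forall>\<^sub>F n in sequentially. (a 0 + real k * a 1) / real n < b - a k / real k"
      using ak by (intro order_tendstoD(2)[OF lim_const_over_n]) simp
    then show "\<forall>\<^sub>F n in sequentially. a n / real n < b"
      using eventually_ge_at_top[of 1]
      by eventually_elim (use subadditive_average_bound[OF sub nonneg k] in fastforce)
  qed
qed

instantiation "fun" :: (type, real_vector) real_vector
begin
definition scaleR_fun_def: "scaleR r f = (\<lambda>x. r *\<^sub>R f x)"
instance by standard (simp_all add: scaleR_fun_def fun_eq_iff scaleR_add_right scaleR_add_left)
end

lemma scaleR_fun_apply [simp]: "(r *\<^sub>R f) x = r *\<^sub>R f x"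
  by (simp add: scaleR_fun_def)

lemma Bseq_add_seq: "Bseq x \<Longrightarrow> Bseq y \<Longrightarrow> Bseq (\<lambda>n. x n + y n :: 'a::real_normed_vector)"
proof -
  assume "Bseq x" "Bseq y"
  then obtain K1 K2 where "\<And>n. norm (x n) \<le> K1" "\<And>n. norm (y n) \<le> K2" by (auto elim!: BseqE)
  then show ?thesis by (intro BseqI'[where K="K1 + K2"]) (meson add_mono norm_triangle_le)
qed

lemma Bseq_norm_dominated:
  fixes x :: "nat \<Rightarrow> 'a::real_normed_vector" and y :: "nat \<Rightarrow> 'b::real_normed_vector"
  assumes "Bseq x" and "\<And>n. norm (y n) \<le> c * norm (x n)"
  shows "Bseq y"
proof -
  obtain K where K: "\<And>n. norm (x n) \<le> K" using assms(1) by (auto elim!: BseqE)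
  have "norm (y n) \<le> \<bar>c\<bar> * K" for n
    using assms(2)[of n] mult_left_mono[OF K[of n], of "\<bar>c\<bar>"] abs_ge_self[of c]
      mult_right_mono[of c "\<bar>c\<bar>" "norm (x n)"] by simp
  then show ?thesis by (rule BseqI')
qed

lemma Bseq_lshift: "Bseq z \<Longrightarrow> Bseq (lshift (z :: nat \<Rightarrow> 'a::real_normed_vector))"
  by (simp add: lshift_def Bseq_Suc_iff)

lemma Bseq_scaleR_fun: "Bseq a \<Longrightarrow> Bseq (c *\<^sub>R (a :: nat \<Rightarrow> 'a::real_normed_vector))"
  by (erule Bseq_norm_dominated[where c="\<bar>c\<bar>"]) simp

lemma subspace_Bseq: "subspace {z :: nat \<Rightarrow> 'a::real_normed_vector. Bseq z}"
  unfolding subspace_def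
proof (intro conjI ballI allI; clarsimp)
  show "Bseq (0 :: nat \<Rightarrow> 'a)" by (simp add: zero_fun_def)
  show "Bseq (a + b)" if "Bseq a" "Bseq b" for a b :: "nat \<Rightarrow> 'a"
    using Bseq_add_seq[OF that] by (simp add: plus_fun_def)
  show "Bseq (c *\<^sub>R a)" if "Bseq a" for c and a :: "nat \<Rightarrow> 'a"
    using that by (rule Bseq_scaleR_fun)
qed

lemma sup_norm_upper: "Bseq y \<Longrightarrow> norm (y m) \<le> sup_norm y"
  unfolding sup_norm_def by (rule cSUP_upper) (auto intro: Bseq_bdd_above')

lemma cscale_zero_right [simp]: "cscale a (0::'a::complex_normed_vector) = 0"
  using norm_cscale[of a "0::'a"] by simp

lemma cscale_zero_left [simp]: "cscale 0 (v::'a::complex_normed_vector) = 0"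
  using norm_cscale[of 0 v] by simp

lemma cscale_minus_one: "cscale (-1) (v :: 'a::complex_normed_vector) = - v"
  using cscale_of_real[of "-1" v] by simp

lemma cscale_sum: "cscale a (sum f A :: 'a::complex_normed_vector) = (\<Sum>i\<in>A. cscale a (f i))"
  by (induction A rule: infinite_finite_induct) (simp_all add: cscale_add_right)

lemma cscale_scaleR_commute: "cscale c (r *\<^sub>R v :: 'a::complex_normed_vector) = r *\<^sub>R cscale c v"
  by (metis cscale_cscale cscale_of_real mult.commute)

lemma cscale_Complex:
  "cscale (Complex a b) (v :: 'a::complex_normed_vector) = a *\<^sub>R v + b *\<^sub>R cscale \<i> v"
proof -
  have "Complex a b = complex_of_real a + complex_of_real b * \<i>" by (simp add: complex_eq_iff)
  then show ?thesis by (simp add: cscale_add_left cscale_of_real flip: cscale_cscale)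
qed

lemma Bseq_cscale: "Bseq x \<Longrightarrow> Bseq (\<lambda>n. cscale c (x n :: 'a::complex_normed_vector))"
  by (erule Bseq_norm_dominated[where c="cmod c"]) (simp add: norm_cscale)

section \<open>The functional \<open>p\<close>\<close>

definition window_sum :: "nat \<Rightarrow> nat \<Rightarrow> (nat \<Rightarrow> 'a::real_normed_vector) \<Rightarrow> 'a" where
  "window_sum n j y = (\<Sum>i<n. y (i + j))"

definition window_sup :: "nat \<Rightarrow> (nat \<Rightarrow> 'a::real_normed_vector) \<Rightarrow> real" where
  "window_sup n y = (SUP j. norm (window_sum n j y))"

lemma p_func_window_sup: "p_func y = lim (\<lambda>n. window_sup n y / real n)"
  by (simp add: p_func_def window_sup_def window_sum_def)

context
  fixes y :: "nat \<Rightarrow> 'a::real_normed_vector" and B :: real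
  assumes bound: "\<And>m. norm (y m) \<le> B"
begin

lemma window_sum_norm_le: "norm (window_sum n j y) \<le> real n * B"
proof -
  have "norm (window_sum n j y) \<le> (\<Sum>i<n. norm (y (i + j)))"
    unfolding window_sum_def by (rule norm_sum)
  also have "\<dots> \<le> (\<Sum>i<n. B)" by (intro sum_mono bound)
  finally show ?thesis by simp
qed

lemma window_sup_upper: "norm (window_sum n j y) \<le> window_sup n y"
  unfolding window_sup_def using window_sum_norm_le
  by (intro cSUP_upper bdd_aboveI2) auto

lemma window_sup_nonneg: "0 \<le> window_sup n y"
  using window_sup_upper[of n 0] norm_ge_zero order_trans by blast

end

text \<open>Splitting a window of length \<open>m + n\<close> shows that \<open>window_sup\<close> is subadditive in the
  length, which is the hypothesis of Fekete's lemma.\<close>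

lemma window_sup_least:
  "(\<And>j. norm (window_sum n j y) \<le> M) \<Longrightarrow> window_sup n y \<le> M"
  unfolding window_sup_def by (rule cSUP_least) auto

lemma window_sum_split: "window_sum (m + n) j y = window_sum m j y + window_sum n (j + m) y"
  by (induction n) (simp_all add: window_sum_def add_ac)

lemma window_sup_subadditive:
  assumes "\<And>m. norm (y m) \<le> B"
  shows "window_sup (m + n) y \<le> window_sup m y + window_sup n y"
proof (rule window_sup_least)
  fix j
  have "norm (window_sum (m + n) j y) \<le> norm (window_sum m j y) + norm (window_sum n (j + m) y)"
    unfolding window_sum_split by (rule norm_triangle_ineq)
  also have "\<dots> \<le> window_sup m y + window_sup n y"
    using window_sup_upper[OF assms] by (intro add_mono)
  finally show "norm (window_sum (m + n) j y) \<le> window_sup m y + window_sup n y" .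
qed

lemma p_func_tendsto:
  assumes "Bseq y"
  shows "(\<lambda>n. window_sup n y / real n) \<longlonglongrightarrow> p_func y"
proof -
  obtain B where B: "\<And>m. norm (y m) \<le> B" using assms by (auto elim!: BseqE)
  have "(\<lambda>n. window_sup n y / real n) \<longlonglongrightarrow> (INF k\<in>{1..}. window_sup k y / real k)"
    using window_sup_subadditive[OF B] window_sup_nonneg[OF B] by (rule fekete_subadditive)
  then show ?thesis by (simp add: p_func_window_sup limI)
qed

lemma p_func_le_limit:
  assumes "Bseq y" "X \<longlonglongrightarrow> c" "\<And>n. n \<ge> 1 \<Longrightarrow> window_sup n y / real n \<le> X n"
  shows "p_func y \<le> c"
  using p_func_tendsto[OF assms(1)] assms(2)
  by (rule LIMSEQ_le) (use assms(3) in \<open>auto intro: exI[of _ 1]\<close>)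

lemma p_func_nonneg:
  assumes "Bseq y"
  shows "0 \<le> p_func y"
proof -
  obtain B where B: "\<And>m. norm (y m) \<le> B" using assms by (auto elim!: BseqE)
  show ?thesis
    by (rule LIMSEQ_le_const[OF p_func_tendsto[OF assms]]) (use window_sup_nonneg[OF B] in auto)
qed

lemma p_func_add:
  assumes y: "Bseq y" and z: "Bseq z"
  shows "p_func (\<lambda>m. y m + z m) \<le> p_func y + p_func z"
proof (rule p_func_le_limit[OF Bseq_add_seq[OF y z] tendsto_add[OF p_func_tendsto[OF y] p_func_tendsto[OF z]]])
  obtain B1 B2 where B1: "\<And>m. norm (y m) \<le> B1" and B2: "\<And>m. norm (z m) \<le> B2"
    using y z by (auto elim!: BseqE)
  fix n
  have "window_sup n (\<lambda>m. y m + z m) \<le> window_sup n y + window_sup n z"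
  proof (rule window_sup_least)
    fix j
    have "norm (window_sum n j (\<lambda>m. y m + z m)) \<le> norm (window_sum n j y) + norm (window_sum n j z)"
      by (simp add: window_sum_def sum.distrib norm_triangle_ineq)
    also have "\<dots> \<le> window_sup n y + window_sup n z"
      by (intro add_mono window_sup_upper[OF B1] window_sup_upper[OF B2])
    finally show "norm (window_sum n j (\<lambda>m. y m + z m)) \<le> window_sup n y + window_sup n z" .
  qed
  then show "window_sup n (\<lambda>m. y m + z m) / real n \<le> window_sup n y / real n + window_sup n z / real n"
    by (simp add: divide_right_mono flip: add_divide_distrib)
qed

lemma p_func_cscale_le:
  assumes y: "Bseq y"
  shows "p_func (\<lambda>m. cscale c (y m)) \<le> cmod c * p_func y"
proof (rule p_func_le_limit[OF Bseq_cscale[OF y] tendsto_mult_left[OF p_func_tendsto[OF y]]])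
  obtain B where B: "\<And>m. norm (y m) \<le> B" using y by (auto elim!: BseqE)
  fix n
  have "window_sup n (\<lambda>m. cscale c (y m)) \<le> cmod c * window_sup n y"
  proof (rule window_sup_least)
    fix j
    have "norm (window_sum n j (\<lambda>m. cscale c (y m))) = cmod c * norm (window_sum n j y)"
      by (simp add: window_sum_def norm_cscale flip: cscale_sum)
    also have "\<dots> \<le> cmod c * window_sup n y" by (intro mult_left_mono window_sup_upper[OF B]) simp
    finally show "norm (window_sum n j (\<lambda>m. cscale c (y m))) \<le> cmod c * window_sup n y" .
  qed
  then show "window_sup n (\<lambda>m. cscale c (y m)) / real n \<le> cmod c * (window_sup n y / real n)"
    by (simp add: divide_right_mono)
qed

lemma p_func_cscale:
  assumes y: "Bseq y"
  shows "p_func (\<lambda>m. cscale c (y m)) = cmod c * p_func y"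
proof (cases "c = 0")
  case True
  then show ?thesis
    using p_func_cscale_le[OF y, of c] p_func_nonneg[OF Bseq_cscale[OF y], of c] by simp
next
  case False
  have "cmod c * p_func y = cmod c * p_func (\<lambda>m. cscale (inverse c) (cscale c (y m)))"
    using False by (simp add: cscale_cscale cscale_one)
  also have "\<dots> \<le> cmod c * (cmod (inverse c) * p_func (\<lambda>m. cscale c (y m)))"
    by (intro mult_left_mono p_func_cscale_le Bseq_cscale y) simp
  also have "\<dots> = p_func (\<lambda>m. cscale c (y m))"
    using False by (simp add: norm_inverse)
  finally have "cmod c * p_func y \<le> p_func (\<lambda>m. cscale c (y m))" .
  with p_func_cscale_le[OF y, of c] show ?thesis by simp
qed

lemma p_func_le_sup_norm:
  assumes y: "Bseq y"
  shows "p_func y \<le> sup_norm y"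
proof (rule p_func_le_limit[OF y tendsto_const])
  fix n :: nat assume "n \<ge> 1"
  moreover have "window_sup n y \<le> real n * sup_norm y"
    by (rule window_sup_least, rule window_sum_norm_le) (rule sup_norm_upper[OF y])
  ultimately show "window_sup n y / real n \<le> sup_norm y" by (simp add: field_simps)
qed

text \<open>\<open>p\<close> vanishes on every \<open>y - T y\<close>: its window sums telescope to \<open>y j - y (j + n)\<close>.\<close>

lemma p_func_shift_difference:
  assumes y: "Bseq y"
  shows "p_func (\<lambda>m. y m - lshift y m) = 0"
proof -
  obtain B where B: "\<And>m. norm (y m) \<le> B" using y by (auto elim!: BseqE)
  have d: "Bseq (\<lambda>m. y m - lshift y m)"
    using Bseq_add_seq[OF y, of "\<lambda>m. - lshift y m"] Bseq_lshift[OF y] by (simp add: Bseq_minus_iff)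
  have "p_func (\<lambda>m. y m - lshift y m) \<le> 0"
  proof (rule p_func_le_limit[OF d lim_const_over_n[of "2 * B"]])
    fix n
    have "window_sup n (\<lambda>m. y m - lshift y m) \<le> 2 * B"
    proof (rule window_sup_least)
      fix j
      have "window_sum n j (\<lambda>m. y m - lshift y m) = y (0 + j) - y (n + j)"
        unfolding window_sum_def lshift_def
        using sum_lessThan_telescope'[where f="\<lambda>i. y (i + j)"] by simp
      then show "norm (window_sum n j (\<lambda>m. y m - lshift y m)) \<le> 2 * B"
        using norm_triangle_ineq4[of "y j" "y (n + j)"] B[of j] B[of "n + j"] by simp
    qed
    then show "window_sup n (\<lambda>m. y m - lshift y m) / real n \<le> 2 * B / real n"
      by (simp add: divide_right_mono)
  qed
  with p_func_nonneg[OF d] show ?thesis by simp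
qed

section \<open>Banach limits are dominated by \<open>p\<close>\<close>

context
  fixes L :: "(nat \<Rightarrow> 'a::complex_normed_vector) \<Rightarrow> complex"
  assumes L: "banach_limit_functional L"
begin

lemma banach_limit_add: "Bseq x \<Longrightarrow> Bseq y \<Longrightarrow> L (\<lambda>n. x n + y n) = L x + L y"
  using L by (simp add: banach_limit_functional_def)

lemma banach_limit_cscale: "Bseq x \<Longrightarrow> L (\<lambda>n. cscale c (x n)) = c * L x"
  using L by (simp add: banach_limit_functional_def)

lemma banach_limit_norm: "Bseq x \<Longrightarrow> cmod (L x) \<le> sup_norm x"
  using L by (simp add: banach_limit_functional_def)

lemma banach_limit_shift: "Bseq x \<Longrightarrow> L (lshift x) = L x"
  using L by (simp add: banach_limit_functional_def)

lemma banach_limit_shift_iterate: "Bseq y \<Longrightarrow> L (\<lambda>m. y (m + i)) = L y"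
proof (induction i)
  case (Suc i)
  have "(\<lambda>m. y (m + Suc i)) = lshift (\<lambda>m. y (m + i))" by (simp add: lshift_def)
  then show ?case
    using banach_limit_shift[OF Bseq_ignore_initial_segment[OF Suc.prems]] Suc by simp
qed simp

lemma banach_limit_window_sum: "Bseq y \<Longrightarrow> L (\<lambda>m. window_sum n m y) = of_nat n * L y"
proof (induction n)
  case 0
  have "L (\<lambda>m. cscale 0 (y m)) = 0" using banach_limit_cscale[OF "0.prems", of 0] by simp
  then show ?case by (simp add: window_sum_def)
next
  case (Suc n)
  obtain B where B: "\<And>m. norm (y m) \<le> B" using Suc.prems by (auto elim!: BseqE)
  have "Bseq (\<lambda>m. window_sum n m y)"
    using window_sum_norm_le[OF B] by (intro BseqI')
  then have "L (\<lambda>m. window_sum n m y + y (m + n)) = L (\<lambda>m. window_sum n m y) + L (\<lambda>m. y (m + n))"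
    by (rule banach_limit_add[OF _ Bseq_ignore_initial_segment[OF Suc.prems]])
  moreover have "(\<lambda>m. window_sum (Suc n) m y) = (\<lambda>m. window_sum n m y + y (m + n))"
    by (simp add: window_sum_def add.commute)
  ultimately show ?case
    using Suc banach_limit_shift_iterate[OF Suc.prems, of n] by (simp add: algebra_simps)
qed

text \<open>Averaging over windows of length \<open>n\<close> does not change \<open>L(y)\<close> but reduces the sup-norm
  to \<open>window_sup n y / n\<close>; letting \<open>n \<rightarrow> \<infinity>\<close> gives \<open>|L(y)| \<le> p(y)\<close>.\<close>

lemma banach_limit_le_window_average:
  assumes y: "Bseq y" and n: "n \<ge> 1"
  shows "cmod (L y) \<le> window_sup n y / real n"
proof -
  obtain B where B: "\<And>m. norm (y m) \<le> B" using y by (auto elim!: BseqE)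
  define w where "w = (\<lambda>m. cscale (of_real (1 / real n)) (window_sum n m y))"
  have window_bseq: "Bseq (\<lambda>m. window_sum n m y)"
    using window_sum_norm_le[OF B] by (intro BseqI')
  have w_bseq: "Bseq w" unfolding w_def by (rule Bseq_cscale[OF window_bseq])
  have "L w = L y"
    unfolding w_def using n
    by (simp add: banach_limit_cscale[OF window_bseq] banach_limit_window_sum[OF y])
  moreover have "sup_norm w \<le> window_sup n y / real n"
    unfolding sup_norm_def
  proof (rule cSUP_least)
    fix m
    have "norm (w m) = norm (window_sum n m y) / real n"
      unfolding w_def by (simp add: norm_cscale norm_divide)
    also have "\<dots> \<le> window_sup n y / real n"
      by (intro divide_right_mono window_sup_upper[OF B]) simp
    finally show "norm (w m) \<le> window_sup n y / real n" .
  qed simp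
  ultimately show ?thesis
    using banach_limit_norm[OF w_bseq] by simp
qed

lemma banach_limit_le_p_func: "Bseq y \<Longrightarrow> cmod (L y) \<le> p_func y"
  by (rule LIMSEQ_le_const[OF p_func_tendsto]) (auto intro: banach_limit_le_window_average)

end

section \<open>Constructing Banach limits from \<open>p\<close>\<close>

definition complexify ::
  "((nat \<Rightarrow> 'a::complex_normed_vector) \<Rightarrow> real) \<Rightarrow> (nat \<Rightarrow> 'a) \<Rightarrow> complex" where
  "complexify f z = Complex (f z) (- f (\<lambda>n. cscale \<i> (z n)))"

context
  fixes f :: "(nat \<Rightarrow> 'a::complex_normed_vector) \<Rightarrow> real"
  assumes f_linear: "linear_functional_on {z. Bseq z} f"
    and f_le_p: "\<And>z. Bseq z \<Longrightarrow> f z \<le> p_func z"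
begin

lemma functional_linear_combination:
  assumes "Bseq a" "Bseq b"
  shows "f (\<lambda>n. r *\<^sub>R a n + s *\<^sub>R b n) = r * f a + s * f b"
proof -
  have "(\<lambda>n. r *\<^sub>R a n + s *\<^sub>R b n) = r *\<^sub>R a + s *\<^sub>R b" by (simp add: fun_eq_iff)
  moreover have "Bseq (r *\<^sub>R a)" "Bseq (s *\<^sub>R b)" using assms by (auto intro: Bseq_scaleR_fun)
  ultimately show ?thesis
    using f_linear assms by (simp add: linear_functional_on_def)
qed

text \<open>Domination by \<open>p\<close> forces shift invariance, as \<open>p(w - T w) = p(T w - w) = 0\<close>.\<close>

lemma dominated_shift_invariant:
  assumes w: "Bseq w"
  shows "f (lshift w) = f w"
proof -
  have d: "Bseq (\<lambda>n. w n - lshift w n)"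
    using Bseq_add_seq[OF w, of "\<lambda>m. - lshift w m"] Bseq_lshift[OF w] by (simp add: Bseq_minus_iff)
  have "f w - f (lshift w) = f (\<lambda>n. w n - lshift w n)"
    using functional_linear_combination[OF w Bseq_lshift[OF w], of 1 "-1"] by simp
  also have "\<dots> \<le> 0" using f_le_p[OF d] p_func_shift_difference[OF w] by simp
  finally have "f w \<le> f (lshift w)" by simp
  have "f (lshift w) - f w = f (\<lambda>n. cscale (-1) (w n - lshift w n))"
    using functional_linear_combination[OF w Bseq_lshift[OF w], of "-1" 1]
    by (simp add: cscale_minus_one)
  also have "\<dots> \<le> 0"
    using f_le_p[OF Bseq_cscale[OF d, of "-1"]] p_func_cscale[OF d, of "-1"] p_func_shift_difference[OF w]
    by simp
  finally show ?thesis using \<open>f w \<le> f (lshift w)\<close> by simp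
qed

lemma complexify_add:
  assumes a: "Bseq a" and b: "Bseq b"
  shows "complexify f (\<lambda>n. a n + b n) = complexify f a + complexify f b"
  using functional_linear_combination[OF a b, where r=1 and s=1]
    functional_linear_combination[OF Bseq_cscale[OF a] Bseq_cscale[OF b], where r=1 and s=1]
  by (simp add: complexify_def complex_eq_iff cscale_add_right)

lemma complexify_cscale:
  assumes z: "Bseq z"
  shows "complexify f (\<lambda>n. cscale c (z n)) = c * complexify f z"
proof (cases c)
  case (Complex a b)
  define iz where "iz = (\<lambda>n. cscale \<i> (z n))"
  have iz_bseq: "Bseq iz" unfolding iz_def by (rule Bseq_cscale[OF z])
  have "(\<lambda>n. cscale c (z n)) = (\<lambda>n. a *\<^sub>R z n + b *\<^sub>R iz n)"
    unfolding Complex iz_def by (simp add: cscale_Complex)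
  then have re: "f (\<lambda>n. cscale c (z n)) = a * f z + b * f iz"
    using functional_linear_combination[OF z iz_bseq] by simp
  have rotate: "(\<lambda>n. cscale \<i> (cscale c (z n))) = (\<lambda>n. (- b) *\<^sub>R z n + a *\<^sub>R iz n)"
    unfolding Complex iz_def
    by (simp add: cscale_Complex cscale_add_right cscale_scaleR_commute cscale_cscale
        cscale_minus_one fun_eq_iff)
  have im: "f (\<lambda>n. cscale \<i> (cscale c (z n))) = - b * f z + a * f iz"
    unfolding rotate by (rule functional_linear_combination[OF z iz_bseq])
  show ?thesis
    using re im by (simp add: complexify_def Complex complex_eq_iff algebra_simps flip: iz_def)
qed

text \<open>The complexification is still dominated by \<open>p\<close>: rotating \<open>z\<close> by a unimodular
  scalar \<open>u\<close> makes its value real, so \<open>|complexify f z| = f(u z) \<le> p(u z) = p(z)\<close>.\<close>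

lemma complexify_norm_le:
  assumes z: "Bseq z"
  shows "cmod (complexify f z) \<le> p_func z"
proof (cases "complexify f z = 0")
  case True then show ?thesis using p_func_nonneg[OF z] by simp
next
  case False
  define u where "u = cnj (complexify f z) / of_real (cmod (complexify f z))"
  have "u * complexify f z = of_real ((cmod (complexify f z))\<^sup>2) / of_real (cmod (complexify f z))"
    unfolding u_def complex_norm_square by (simp add: mult.commute)
  then have "u * complexify f z = of_real (cmod (complexify f z))"
    using False by (simp add: power2_eq_square)
  then have "complexify f (\<lambda>n. cscale u (z n)) = of_real (cmod (complexify f z))"
    using complexify_cscale[OF z, of u] by simp
  then have "cmod (complexify f z) = f (\<lambda>n. cscale u (z n))"
    using Re_complex_of_real by (metis complexify_def complex.sel(1))
  also have "\<dots> \<le> p_func (\<lambda>n. cscale u (z n))" by (rule f_le_p[OF Bseq_cscale[OF z]])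
  also have "\<dots> = p_func z"
    using p_func_cscale[OF z, of u] False by (simp add: u_def norm_divide)
  finally show ?thesis .
qed

lemma banach_limit_complexify: "banach_limit_functional (complexify f)"
  unfolding banach_limit_functional_def
proof (intro conjI allI impI)
  fix z :: "nat \<Rightarrow> 'a" assume z: "Bseq z"
  show "cmod (complexify f z) \<le> sup_norm z"
    using complexify_norm_le[OF z] p_func_le_sup_norm[OF z] by simp
  have "lshift (\<lambda>n. cscale \<i> (z n)) = (\<lambda>n. cscale \<i> (lshift z n))" by (simp add: lshift_def)
  then show "complexify f (lshift z) = complexify f z"
    using dominated_shift_invariant[OF z] dominated_shift_invariant[OF Bseq_cscale[OF z, of \<i>]]
    by (simp add: complexify_def)
qed (use complexify_add complexify_cscale in auto)

end

lemma exists_banach_limit_nonzero: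
  fixes y :: "nat \<Rightarrow> 'a::complex_normed_vector"
  assumes y: "Bseq y" and py: "p_func y \<noteq> 0"
  shows "\<exists>L. banach_limit_functional L \<and> L y \<noteq> 0"
proof -
  have "sublinear_on {z :: nat \<Rightarrow> 'a. Bseq z} p_func"
    unfolding sublinear_on_def
  proof (intro conjI ballI allI impI; clarsimp)
    show "p_func (a + b) \<le> p_func a + p_func b" if "Bseq a" "Bseq b" for a b :: "nat \<Rightarrow> 'a"
      using p_func_add[OF that] by (simp add: plus_fun_def)
    show "p_func (c *\<^sub>R a) \<le> c * p_func a" if "c > 0" "Bseq a" for c and a :: "nat \<Rightarrow> 'a"
      using p_func_cscale[OF that(2), of "of_real c"] that(1)
      by (simp add: cscale_of_real scaleR_fun_def)
  qed
  then obtain f where f: "linear_functional_on {z. Bseq z} f"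
    and f_le: "\<And>z. z \<in> {z. Bseq z} \<Longrightarrow> f z \<le> p_func z" and fy: "f y = p_func y"
    using hahn_banach_dominated[OF subspace_Bseq] y by blast
  have "banach_limit_functional (complexify f)"
    using f f_le by (intro banach_limit_complexify) auto
  moreover have "complexify f y \<noteq> 0" using fy py by (simp add: complexify_def complex_eq_iff)
  ultimately show ?thesis by blast
qed

lemma banach_limits_vanish_iff:
  fixes y :: "nat \<Rightarrow> 'a::complex_normed_vector"
  assumes "Bseq y"
  shows "(\<forall>L. banach_limit_functional L \<longrightarrow> L y = 0) \<longleftrightarrow> p_func y = 0"
proof
  assume "\<forall>L. banach_limit_functional L \<longrightarrow> L y = 0"
  then show "p_func y = 0" using exists_banach_limit_nonzero[OF assms] by blast
next
  assume "p_func y = 0"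
  then show "\<forall>L. banach_limit_functional L \<longrightarrow> L y = 0"
    using banach_limit_le_p_func[OF _ assms] by (metis norm_le_zero_iff)
qed

lemma strongly_almost_convergent_iff_banach_limits_vanish:
  fixes x :: "nat \<Rightarrow> 'a::complex_normed_vector"
  assumes "Bseq x"
  shows "strongly_almost_convergent x v \<longleftrightarrow>
    (\<forall>L. banach_limit_functional L \<longrightarrow> L (\<lambda>n. x n - v) = 0)"
proof -
  have "L x = L (const_seq v) \<longleftrightarrow> L (\<lambda>n. x n - v) = 0" if "banach_limit_functional L" for L
    using banach_limit_add[OF that Bseq_add[OF assms, of "- v"] Bfun_const[of v]]
    by (simp add: const_seq_def)
  then show ?thesis unfolding strongly_almost_convergent_def by blast
qed

theorem mainTheorem11:
  fixes x :: "nat \<Rightarrow> 'a::complex_normed_vector" and v :: 'a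
  assumes "Bseq x"
  shows "strongly_almost_convergent x v \<longleftrightarrow> p_func (\<lambda>n. x n - v) = 0"
proof -
  have "Bseq (\<lambda>n. x n - v)" using Bseq_add[OF assms, of "- v"] by simp
  then show ?thesis
    using strongly_almost_convergent_iff_banach_limits_vanish[OF assms] banach_limits_vanish_iff
    by simp
qed

end
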